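(* Let $\alpha\in\mathbb{Q}(i)\setminus\mathbb{R}$ with $|\alpha|>1$, with minimal primitive polynomial $P_\alpha(X)=a_2X^2+a_1X+a_0$ ($a_0,a_1,a_2\in\mathbb{Z}$ coprime, $a_2>0$, $P_\alpha(\alpha)=0$), and $\mathcal{D}=\{0,\ldots,|a_0|-1\}$, $\Lambda_\alpha=\mathbb{Z}[\alpha]\cap\alpha^{-1}\mathbb{Z}[\alpha^{-1}]$. Let $r=(\tfrac{a_2}{a_0},\tfrac{a_1}{a_0})$ and $\tau_r:\mathbb{Z}^2\to\mathbb{Z}^2$, $(z_0,z_1)\mapsto\left(z_1,-\left\lfloor \tfrac{a_2}{a_0}z_0+\tfrac{a_1}{a_0}z_1\right\rfloor\right)$. Let $\mathcal{V}_0=\{\pm(1,0),\pm(0,1)\}$, $\mathcal{V}_{j+1}=\mathcal{V}_j\cup\tau_r(\mathcal{V}_j)\cup(-\tau_r(-\mathcal{V}_j))$ for $j\ge0$, and $\mathcal{V}_r=\bigcup_{j\ge0}\mathcal{V}_j$. Let $\iota_\alpha:\mathbb{Q}^2\to\mathbb{Q}(i)$, $(z_0,z_1)\mapsto \operatorname{sgn}(a_0)\big(z_0a_2+z_1(a_2\alpha+a_1)\big)$, and $\mathcal{V}_\alpha=\iota_\alpha(\mathcal{V}_r)$. Then $\alpha$ has the finiteness property in $\Lambda_\alpha$ if and only if every $N\in\mathcal{V}_\alpha$ has an integer $\alpha$-expansion.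
   Context: For $x\in\Lambda_\alpha$ there is a unique $d\in\mathcal{D}$ with $(x-d)/\alpha\in\Lambda_\alpha$, and $T_\alpha(x)=(x-d)/\alpha$. An element $N\in\Lambda_\alpha$ has an integer $\alpha$-expansion if the orbit $N, T_\alpha(N), T_\alpha^2(N),\ldots$ reaches $0$; $\alpha$ has the finiteness property in $\Lambda_\alpha$ if every $N\in\Lambda_\alpha$ has an integer $\alpha$-expansion. *)

theory Defs
  imports Complex_Main
begin

definition Zalpha :: "complex \<Rightarrow> complex set" where
  "Zalpha \<alpha> = {x. \<exists>(n::nat) (c::nat \<Rightarrow> int). x = (\<Sum>k\<le>n. of_int (c k) * \<alpha> ^ k)}"

definition invZalpha :: "complex \<Rightarrow> complex set" where
  "invZalpha \<alpha> = {x. \<exists>(n::nat) (c::nat \<Rightarrow> int). x = (\<Sum>k=1..n. of_int (c k) * inverse \<alpha> ^ k)}"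

definition Lambda :: "complex \<Rightarrow> complex set" where
  "Lambda \<alpha> = Zalpha \<alpha> \<inter> invZalpha \<alpha>"

definition digits :: "int \<Rightarrow> complex set" where
  "digits a0 = {of_int d | d. 0 \<le> d \<and> d < \<bar>a0\<bar>}"

definition T_alpha :: "complex \<Rightarrow> int \<Rightarrow> complex \<Rightarrow> complex" where
  "T_alpha \<alpha> a0 x = (x - (THE d. d \<in> digits a0 \<and> (x - d) / \<alpha> \<in> Lambda \<alpha>)) / \<alpha>"

definition has_int_expansion :: "complex \<Rightarrow> int \<Rightarrow> complex \<Rightarrow> bool" where
  "has_int_expansion \<alpha> a0 N \<longleftrightarrow> (\<exists>n. (T_alpha \<alpha> a0 ^^ n) N = 0)"

definition finiteness_property :: "complex \<Rightarrow> int \<Rightarrow> bool" where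
  "finiteness_property \<alpha> a0 \<longleftrightarrow> (\<forall>N \<in> Lambda \<alpha>. has_int_expansion \<alpha> a0 N)"

definition tau_r :: "int \<Rightarrow> int \<Rightarrow> int \<Rightarrow> int \<times> int \<Rightarrow> int \<times> int" where
  "tau_r a0 a1 a2 z = (snd z,
     - \<lfloor>(of_int a2 / of_int a0 :: rat) * of_int (fst z) + (of_int a1 / of_int a0) * of_int (snd z)\<rfloor>)"

definition negp :: "int \<times> int \<Rightarrow> int \<times> int" where
  "negp z = (- fst z, - snd z)"

fun Vj :: "int \<Rightarrow> int \<Rightarrow> int \<Rightarrow> nat \<Rightarrow> (int \<times> int) set" where
  "Vj a0 a1 a2 0 = {(1,0), (-1,0), (0,1), (0,-1)}"
| "Vj a0 a1 a2 (Suc j) = Vj a0 a1 a2 j \<union> tau_r a0 a1 a2 ` Vj a0 a1 a2 j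
     \<union> (\<lambda>z. negp (tau_r a0 a1 a2 (negp z))) ` Vj a0 a1 a2 j"

definition V_r :: "int \<Rightarrow> int \<Rightarrow> int \<Rightarrow> (int \<times> int) set" where
  "V_r a0 a1 a2 = (\<Union>j. Vj a0 a1 a2 j)"

definition iota :: "complex \<Rightarrow> int \<Rightarrow> int \<Rightarrow> int \<Rightarrow> int \<times> int \<Rightarrow> complex" where
  "iota \<alpha> a0 a1 a2 z = of_int (sgn a0) *
     (of_int (fst z) * of_int a2 + of_int (snd z) * (of_int a2 * \<alpha> + of_int a1))"

definition V_alpha :: "complex \<Rightarrow> int \<Rightarrow> int \<Rightarrow> int \<Rightarrow> complex set" where
  "V_alpha \<alpha> a0 a1 a2 = iota \<alpha> a0 a1 a2 ` V_r a0 a1 a2"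

end

theory Submission
  imports Defs "HOL-Computational_Algebra.Polynomial" "HOL-Library.Product_Plus"
begin

(*
  Since \<alpha> is a non-real root of the primitive polynomial a2 X\<^sup>2 + a1 X + a0, we have
  a0 = a2 |\<alpha>|\<^sup>2 > 0, and Gauss's lemma shows that a0 divides every integer of the form \<alpha> y
  with y \<in> \<int>[\<alpha>]. Hence \<Lambda>\<^sub>\<alpha> is exactly the lattice \<iota>\<^sub>\<alpha>(\<int>\<^sup>2), the digit of \<iota>\<^sub>\<alpha>(z) is
  (a2 z0 + a1 z1) mod a0, and T\<^sub>\<alpha> \<circ> \<iota>\<^sub>\<alpha> = \<iota>\<^sub>\<alpha> \<circ> \<tau>\<^sub>r; so \<alpha> has the finiteness property iff
  every \<tau>\<^sub>r-orbit reaches 0. Finally \<tau>\<^sub>r(z + v) - \<tau>\<^sub>r(z) is either \<tau>\<^sub>r(v) or -\<tau>\<^sub>r(-v), so for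
  v \<in> \<V>\<^sub>r the \<tau>\<^sub>r-orbits of z + v and z differ by elements of \<V>\<^sub>r; as \<V>\<^sub>r contains \<plusminus>(1,0)
  and \<plusminus>(0,1), termination on \<V>\<^sub>r propagates to all of \<int>\<^sup>2.
*)

section \<open>Orbits of tau_r\<close>

lemma floor_add_cases:
  fixes x y :: "'a::floor_ceiling"
  shows "\<lfloor>x + y\<rfloor> = \<lfloor>x\<rfloor> + \<lfloor>y\<rfloor> \<or> \<lfloor>x + y\<rfloor> = \<lfloor>x\<rfloor> - \<lfloor>- y\<rfloor>"
proof (cases "frac x + frac y < 1")
  case True
  then show ?thesis by (simp add: floor_add)
next
  case False
  then have "frac y \<noteq> 0"
    using frac_lt_1[of x] by linarith
  then have "y \<noteq> of_int \<lfloor>y\<rfloor>"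
    by (metis Ints_of_int frac_eq_0_iff)
  then have "\<lfloor>- y\<rfloor> = - \<lfloor>y\<rfloor> - 1"
    by (simp add: floor_minus ceiling_altdef)
  moreover have "\<lfloor>x + y\<rfloor> = \<lfloor>x\<rfloor> + \<lfloor>y\<rfloor> + 1"
    using False by (simp add: floor_add)
  ultimately show ?thesis by simp
qed

lemma negp_eq_uminus: "negp = uminus"
  by (simp add: negp_def fun_eq_iff)

lemma tau_r_add_cases:
  "tau_r a0 a1 a2 (z + v) = tau_r a0 a1 a2 z + tau_r a0 a1 a2 v \<or>
   tau_r a0 a1 a2 (z + v) = tau_r a0 a1 a2 z - tau_r a0 a1 a2 (- v)"
proof -
  define L :: "int \<times> int \<Rightarrow> rat" where
    "L w = of_int a2 / of_int a0 * of_int (fst w) + of_int a1 / of_int a0 * of_int (snd w)" for w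
  have tau: "tau_r a0 a1 a2 w = (snd w, - \<lfloor>L w\<rfloor>)" for w
    by (simp add: tau_r_def L_def)
  have "L (z + v) = L z + L v" "L (- v) = - L v"
    by (simp_all add: L_def algebra_simps)
  then show ?thesis
    using floor_add_cases[of "L z" "L v"] by (auto simp: tau prod_eq_iff)
qed

lemma tau_r_eq_div: "tau_r a0 a1 a2 z = (snd z, - ((a2 * fst z + a1 * snd z) div a0))"
proof -
  have "(of_int a2 / of_int a0 :: rat) * of_int (fst z) + of_int a1 / of_int a0 * of_int (snd z)
        = of_int (a2 * fst z + a1 * snd z) / of_int a0"
    by (simp add: add_divide_distrib)
  then show ?thesis
    unfolding tau_r_def by (simp only: floor_divide_of_int_eq)
qed

lemma Vj_subset_V_r: "Vj a0 a1 a2 j \<subseteq> V_r a0 a1 a2"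
  unfolding V_r_def by blast

lemma unit_vectors_in_V_r: "{(1, 0), (-1, 0), (0, 1), (0, -1)} \<subseteq> V_r a0 a1 a2"
  using Vj_subset_V_r[of a0 a1 a2 0] by simp

lemma V_r_closed:
  assumes "v \<in> V_r a0 a1 a2"
  shows "tau_r a0 a1 a2 v \<in> V_r a0 a1 a2" and "- tau_r a0 a1 a2 (- v) \<in> V_r a0 a1 a2"
proof -
  obtain j where "v \<in> Vj a0 a1 a2 j"
    using assms by (auto simp: V_r_def)
  then have "tau_r a0 a1 a2 v \<in> Vj a0 a1 a2 (Suc j)" "- tau_r a0 a1 a2 (- v) \<in> Vj a0 a1 a2 (Suc j)"
    by (auto simp: negp_eq_uminus)
  then show "tau_r a0 a1 a2 v \<in> V_r a0 a1 a2" "- tau_r a0 a1 a2 (- v) \<in> V_r a0 a1 a2"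
    using Vj_subset_V_r by blast+
qed

lemma tau_r_funpow_add:
  assumes "v \<in> V_r a0 a1 a2"
  shows "\<exists>w \<in> V_r a0 a1 a2. (tau_r a0 a1 a2 ^^ n) (z + v) = (tau_r a0 a1 a2 ^^ n) z + w"
proof (induction n)
  case 0
  then show ?case using assms by auto
next
  case (Suc n)
  then obtain w where w: "w \<in> V_r a0 a1 a2"
    and orbit: "(tau_r a0 a1 a2 ^^ n) (z + v) = (tau_r a0 a1 a2 ^^ n) z + w"
    by blast
  let ?x = "(tau_r a0 a1 a2 ^^ n) z"
  from tau_r_add_cases[of a0 a1 a2 ?x w] show ?case
  proof
    assume "tau_r a0 a1 a2 (?x + w) = tau_r a0 a1 a2 ?x + tau_r a0 a1 a2 w"
    then show ?case
      using V_r_closed(1)[OF w] by (intro bexI[of _ "tau_r a0 a1 a2 w"]) (simp_all add: orbit)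
  next
    assume "tau_r a0 a1 a2 (?x + w) = tau_r a0 a1 a2 ?x - tau_r a0 a1 a2 (- w)"
    then show ?case
      using V_r_closed(2)[OF w] by (intro bexI[of _ "- tau_r a0 a1 a2 (- w)"]) (simp_all add: orbit)
  qed
qed

definition tau_r_terminates :: "int \<Rightarrow> int \<Rightarrow> int \<Rightarrow> int \<times> int \<Rightarrow> bool" where
  "tau_r_terminates a0 a1 a2 z \<longleftrightarrow> (\<exists>n. (tau_r a0 a1 a2 ^^ n) z = 0)"

lemma tau_r_terminates_add:
  assumes "tau_r_terminates a0 a1 a2 z" and "v \<in> V_r a0 a1 a2"
    and V_r_terminates: "\<forall>u \<in> V_r a0 a1 a2. tau_r_terminates a0 a1 a2 u"
  shows "tau_r_terminates a0 a1 a2 (z + v)"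
proof -
  obtain m where m: "(tau_r a0 a1 a2 ^^ m) z = 0"
    using assms(1) by (auto simp: tau_r_terminates_def)
  obtain w where "w \<in> V_r a0 a1 a2" and w: "(tau_r a0 a1 a2 ^^ m) (z + v) = w"
    using tau_r_funpow_add[OF assms(2), of m z] m by auto
  then obtain k where "(tau_r a0 a1 a2 ^^ k) w = 0"
    using V_r_terminates by (auto simp: tau_r_terminates_def)
  then have "(tau_r a0 a1 a2 ^^ (k + m)) (z + v) = 0"
    by (simp add: funpow_add w)
  then show ?thesis
    unfolding tau_r_terminates_def by blast
qed

lemma tau_r_terminates_all_iff_V_r:
  "(\<forall>z. tau_r_terminates a0 a1 a2 z) \<longleftrightarrow> (\<forall>v \<in> V_r a0 a1 a2. tau_r_terminates a0 a1 a2 v)"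
proof (intro iffI allI)
  fix z :: "int \<times> int"
  assume V_r_terminates: "\<forall>v \<in> V_r a0 a1 a2. tau_r_terminates a0 a1 a2 v"
  let ?T = "tau_r_terminates a0 a1 a2"
  have step: "?T (x + v)" if "?T x" "v \<in> {(1, 0), (-1, 0), (0, 1), (0, -1)}" for x v
    using tau_r_terminates_add[OF that(1) _ V_r_terminates] unit_vectors_in_V_r that(2) by blast
  have "?T (a, 0)" for a
  proof (induction a rule: int_induct[where k = 0])
    case base
    show ?case by (auto simp: tau_r_terminates_def zero_prod_def intro: exI[of _ 0])
  next
    case (step1 i)
    then show ?case using step[of "(i, 0)" "(1, 0)"] by simp
  next
    case (step2 i)
    then show ?case using step[of "(i, 0)" "(-1, 0)"] by simp
  qed
  moreover have "?T (a, b)" if "?T (a, 0)" for a b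
  proof (induction b rule: int_induct[where k = 0])
    case base
    show ?case using that by simp
  next
    case (step1 i)
    then show ?case using step[of "(a, i)" "(0, 1)"] by simp
  next
    case (step2 i)
    then show ?case using step[of "(a, i)" "(0, -1)"] by simp
  qed
  ultimately show "?T z"
    by (metis prod.collapse)
qed blast

section \<open>Integer polynomials and Z[alpha]\<close>

lemma map_poly_of_int_add:
  "map_poly (of_int :: int \<Rightarrow> 'a::ring_1) (p + q) = map_poly of_int p + map_poly of_int q"
  by (intro poly_eqI) (simp add: coeff_map_poly)

lemma map_poly_of_int_diff:
  "map_poly (of_int :: int \<Rightarrow> 'a::ring_1) (p - q) = map_poly of_int p - map_poly of_int q"
  by (intro poly_eqI) (simp add: coeff_map_poly)

lemma map_poly_of_int_mult:
  "map_poly (of_int :: int \<Rightarrow> 'a::comm_ring_1) (p * q) = map_poly of_int p * map_poly of_int q"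
  by (induction p) (simp_all add: map_poly_pCons map_poly_smult map_poly_of_int_add)

lemma degree_le_1_eq:
  assumes "degree p \<le> 1"
  shows "p = [:coeff p 0, coeff p 1:]"
proof (rule poly_eqI)
  fix n
  show "coeff p n = coeff [:coeff p 0, coeff p 1:] n"
    using assms by (cases n; cases "n - 1") (auto simp: coeff_eq_0 coeff_pCons)
qed

lemma content_1_dvd_smult_cancel:
  fixes p q :: "'a::{factorial_ring_gcd, normalization_semidom_multiplicative} poly"
  assumes "content p = 1" and "a \<noteq> 0" and "p dvd smult a q"
  shows "p dvd q"
proof -
  obtain r where r: "smult a q = p * r"
    using assms(3) by (auto elim: dvdE)
  have "normalize a * content q = content (p * r)"
    by (simp flip: r)
  also have "\<dots> = content r"
    by (simp add: content_mult assms(1))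
  finally have "[:a:] dvd r"
    by (metis dvd_triv_left normalize_dvd_iff const_poly_dvd_iff_dvd_content)
  then obtain r' where "r = smult a r'"
    by (auto elim: dvdE)
  then have "smult a q = smult a (p * r')"
    using r by (simp add: mult_smult_right)
  then show ?thesis
    using smult_cancel[OF assms(2)] by (metis dvd_triv_left)
qed

lemma Zalpha_iff_poly: "x \<in> Zalpha \<alpha> \<longleftrightarrow> (\<exists>U. x = poly (map_poly of_int U) \<alpha>)"
proof -
  have sum_eq_poly: "(\<Sum>k\<le>n. of_int (c k) * \<alpha> ^ k) = poly (map_poly of_int (\<Sum>k\<le>n. monom (c k) k)) \<alpha>"
    for n c
    by (induction n) (simp_all add: map_poly_of_int_add map_poly_monom poly_monom)
  have "poly (map_poly of_int U) \<alpha> = (\<Sum>k\<le>degree U. of_int (coeff U k) * \<alpha> ^ k)" for U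
    unfolding sum_eq_poly poly_as_sum_of_monoms ..
  then show ?thesis
    unfolding Zalpha_def by (auto simp: sum_eq_poly)
qed

lemma of_int_in_Zalpha: "of_int k \<in> Zalpha \<alpha>"
  unfolding Zalpha_iff_poly by (rule exI[of _ "[:k:]"]) (simp add: map_poly_pCons)

lemma Zalpha_diff: "x \<in> Zalpha \<alpha> \<Longrightarrow> y \<in> Zalpha \<alpha> \<Longrightarrow> x - y \<in> Zalpha \<alpha>"
  unfolding Zalpha_iff_poly by (metis map_poly_of_int_diff poly_diff)

lemma alpha_mult_in_Zalpha: "x \<in> Zalpha \<alpha> \<Longrightarrow> \<alpha> * x \<in> Zalpha \<alpha>"
  unfolding Zalpha_iff_poly by (metis poly_pCons map_poly_pCons of_int_0 add_0)

lemma mult_sum_inverse_powers: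
  fixes \<alpha> :: "'a::field"
  assumes "\<alpha> \<noteq> 0"
  shows "\<alpha> * (\<Sum>k=1..Suc n. c k * inverse \<alpha> ^ k) = c 1 + (\<Sum>k=1..n. c (Suc k) * inverse \<alpha> ^ k)"
proof -
  have "\<alpha> * (\<Sum>k=1..Suc n. c k * inverse \<alpha> ^ k) = (\<Sum>k=0..n. c (Suc k) * (\<alpha> * inverse \<alpha> ^ Suc k))"
    unfolding One_nat_def sum.shift_bounds_cl_Suc_ivl sum_distrib_left by (simp add: ac_simps)
  also have "\<dots> = (\<Sum>k=0..n. c (Suc k) * inverse \<alpha> ^ k)"
    using assms by (simp add: power_Suc mult.assoc [symmetric])
  also have "\<dots> = c 1 + (\<Sum>k=1..n. c (Suc k) * inverse \<alpha> ^ k)"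
    by (simp add: sum.atLeast_Suc_atMost)
  finally show ?thesis .
qed

lemma nonreal_int_lin_indep:
  assumes "Im \<alpha> \<noteq> 0" and "of_int c0 + of_int c1 * \<alpha> = 0"
  shows "c0 = 0 \<and> c1 = 0"
proof -
  have "of_int c1 * Im \<alpha> = 0"
    using arg_cong[OF assms(2), of Im] by simp
  then have "c1 = 0" using assms(1) by simp
  then show ?thesis using assms(2) by simp
qed

section \<open>Non-real roots of primitive integer quadratics\<close>

locale nonreal_quadratic_root =
  fixes \<alpha> :: complex and a0 a1 a2 :: int
  assumes Im_nonzero: "Im \<alpha> \<noteq> 0" and a2_pos: "a2 > 0"
    and coeffs_coprime: "gcd a0 (gcd a1 a2) = 1"
    and root: "of_int a2 * \<alpha>\<^sup>2 + of_int a1 * \<alpha> + of_int a0 = 0"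
begin

definition min_poly :: "int poly" where "min_poly = [:a0, a1, a2:]"

lemma alpha_nonzero: "\<alpha> \<noteq> 0"
  using Im_nonzero by auto

lemma a0_pos: "a0 > 0"
proof -
  have "Im \<alpha> * (2 * a2 * Re \<alpha> + a1) = 0"
    using arg_cong[OF root, of Im] by (simp add: power2_eq_square algebra_simps)
  then have "a1 = - 2 * a2 * Re \<alpha>"
    using Im_nonzero by simp
  then have "a0 = a2 * ((Re \<alpha>)\<^sup>2 + (Im \<alpha>)\<^sup>2)"
    using arg_cong[OF root, of Re] by (simp add: power2_eq_square algebra_simps)
  moreover have "(Re \<alpha>)\<^sup>2 + (Im \<alpha>)\<^sup>2 > 0"
    using Im_nonzero by (simp add: sum_power2_gt_zero_iff)
  ultimately have "real_of_int a0 > 0"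
    using a2_pos by simp
  then show ?thesis by simp
qed

lemma root_inverse: "of_int a2 + of_int a1 * inverse \<alpha> + of_int a0 * inverse \<alpha> ^ 2 = 0"
proof -
  have "of_int a2 + of_int a1 * inverse \<alpha> + of_int a0 * inverse \<alpha> ^ 2
      = inverse \<alpha> ^ 2 * (of_int a2 * \<alpha>\<^sup>2 + of_int a1 * \<alpha> + of_int a0)"
    using alpha_nonzero by (simp add: field_simps power2_eq_square)
  then show ?thesis
    by (simp add: root)
qed

lemma a0_mult_inverse_alpha: "of_int a0 * inverse \<alpha> = - (of_int a2 * \<alpha> + of_int a1)"
  using root alpha_nonzero by (simp add: field_simps power2_eq_square eq_neg_iff_add_eq_0)

lemma min_poly_root: "poly (map_poly of_int min_poly) \<alpha> = 0"
  using root by (simp add: min_poly_def map_poly_pCons power2_eq_square algebra_simps)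

lemma content_min_poly: "content min_poly = 1"
  using coeffs_coprime a2_pos by (simp add: min_poly_def content_def gcd.commute gcd.left_commute)

lemma min_poly_dvd:
  assumes "poly (map_poly of_int Q) \<alpha> = 0"
  shows "min_poly dvd Q"
proof -
  have "min_poly \<noteq> 0" and "degree min_poly = 2"
    using a2_pos by (simp_all add: min_poly_def)
  then have "degree (pseudo_mod Q min_poly) \<le> 1"
    using pseudo_mod(2)[of min_poly Q] by auto
  then obtain r0 r1 where r: "pseudo_mod Q min_poly = [:r0, r1:]"
    using degree_le_1_eq by blast
  obtain a q where a: "a \<noteq> 0" and division: "smult a Q = min_poly * q + [:r0, r1:]"
    using pseudo_mod(1)[OF \<open>min_poly \<noteq> 0\<close>, of Q] r by auto
  have "of_int r0 + of_int r1 * \<alpha> = poly (map_poly of_int (min_poly * q + [:r0, r1:])) \<alpha>"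
    using min_poly_root by (simp add: map_poly_of_int_mult map_poly_of_int_add map_poly_pCons)
  also have "\<dots> = poly (map_poly of_int (smult a Q)) \<alpha>"
    by (simp only: division)
  also have "\<dots> = 0"
    using assms by (simp add: map_poly_smult)
  finally have "r0 = 0 \<and> r1 = 0"
    using nonreal_int_lin_indep[OF Im_nonzero] by blast
  then have "smult a Q = min_poly * q"
    using division by simp
  then show ?thesis
    using content_1_dvd_smult_cancel[OF content_min_poly a] by (metis dvd_triv_left)
qed

lemma a0_dvd_if_alpha_mult:
  assumes "y \<in> Zalpha \<alpha>" and "of_int m = \<alpha> * y"
  shows "a0 dvd m"
proof -
  obtain U where U: "y = poly (map_poly of_int U) \<alpha>"
    using assms(1) Zalpha_iff_poly by blast
  have "poly (map_poly of_int (pCons 0 U - [:m:])) \<alpha> = 0"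
    using assms(2) by (simp add: U map_poly_of_int_diff map_poly_pCons)
  then obtain S where S: "pCons 0 U - [:m:] = min_poly * S"
    using min_poly_dvd by (auto elim: dvdE)
  have "- m = coeff (min_poly * S) 0"
    by (simp flip: S)
  also have "\<dots> = a0 * coeff S 0"
    by (simp add: coeff_mult_0 min_poly_def)
  finally show ?thesis
    by (metis dvd_minus_iff dvd_triv_left)
qed

abbreviation \<iota> :: "int \<times> int \<Rightarrow> complex" where
  "\<iota> \<equiv> iota \<alpha> a0 a1 a2"

lemma iota_eq: "\<iota> z = of_int (fst z) * of_int a2 + of_int (snd z) * (of_int a2 * \<alpha> + of_int a1)"
  using a0_pos by (simp add: iota_def)

lemma alpha_mult_iota: "\<alpha> * \<iota> u = of_int (- snd u * a0) + of_int (fst u * a2) * \<alpha>"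
proof -
  have "\<alpha> * \<iota> u - (of_int (- snd u * a0) + of_int (fst u * a2) * \<alpha>)
      = of_int (snd u) * (of_int a2 * \<alpha>\<^sup>2 + of_int a1 * \<alpha> + of_int a0)"
    by (simp add: iota_eq power2_eq_square algebra_simps)
  then show ?thesis
    by (simp add: root)
qed

lemma iota_eq_0_iff: "\<iota> z = 0 \<longleftrightarrow> z = 0"
proof
  have "of_int (fst z * a2 + snd z * a1) + of_int (snd z * a2) * \<alpha> = \<iota> z"
    by (simp add: iota_eq algebra_simps)
  also assume "\<iota> z = 0"
  finally have "fst z * a2 + snd z * a1 = 0 \<and> snd z * a2 = 0"
    by (rule nonreal_int_lin_indep[OF Im_nonzero])
  then show "z = 0"
    using a2_pos by (auto simp: prod_eq_iff)
qed (simp add: iota_eq)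

lemma iota_in_Lambda: "\<iota> z \<in> Lambda \<alpha>"
proof -
  have "\<iota> z = poly (map_poly of_int [:fst z * a2 + snd z * a1, snd z * a2:]) \<alpha>"
    by (simp add: iota_eq map_poly_pCons algebra_simps)
  then have "\<iota> z \<in> Zalpha \<alpha>"
    unfolding Zalpha_iff_poly by blast
  moreover have "\<iota> z \<in> invZalpha \<alpha>"
  proof -
    define c :: "nat \<Rightarrow> int"
      where "c k = (if k = 1 then - a1 * fst z - a0 * snd z else - a0 * fst z)" for k
    have "\<iota> z - (\<Sum>k=1..2. of_int (c k) * inverse \<alpha> ^ k) =
        of_int (fst z) * (of_int a2 + of_int a1 * inverse \<alpha> + of_int a0 * inverse \<alpha> ^ 2)
        + of_int (snd z) * (of_int a2 * \<alpha> + of_int a1 + of_int a0 * inverse \<alpha>)"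
      by (simp add: iota_eq c_def numeral_2_eq_2 algebra_simps)
    also have "\<dots> = 0"
      by (simp add: root_inverse a0_mult_inverse_alpha)
    finally show ?thesis
      unfolding invZalpha_def by auto
  qed
  ultimately show ?thesis
    by (simp add: Lambda_def)
qed

lemma in_iota_range_if_alpha_mult:
  assumes "x \<in> Zalpha \<alpha>" and "\<alpha> * x = of_int c + \<iota> w"
  shows "x \<in> range \<iota>"
proof -
  define m where "m = c + a2 * fst w + a1 * snd w"
  have m: "\<alpha> * (x - of_int (a2 * snd w)) = of_int m"
    using assms(2) by (simp add: m_def iota_eq algebra_simps)
  moreover have "x - of_int (a2 * snd w) \<in> Zalpha \<alpha>"
    using assms(1) of_int_in_Zalpha Zalpha_diff by blast
  ultimately obtain t where t: "m = a0 * t"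
    using a0_dvd_if_alpha_mult by (metis dvdE)
  have "x = inverse \<alpha> * of_int m + of_int (a2 * snd w)"
    using m alpha_nonzero by (simp add: field_simps)
  also have "\<dots> = of_int t * (of_int a0 * inverse \<alpha>) + of_int (a2 * snd w)"
    by (simp add: t)
  also have "\<dots> = of_int t * (- (of_int a2 * \<alpha> + of_int a1)) + of_int (a2 * snd w)"
    by (simp only: a0_mult_inverse_alpha)
  also have "\<dots> = \<iota> (snd w, - t)"
    by (simp add: iota_eq algebra_simps)
  finally show ?thesis by blast
qed

lemma Lambda_eq_iota_range: "Lambda \<alpha> = range \<iota>"
proof (intro antisym subsetI)
  fix x assume "x \<in> Lambda \<alpha>"
  then obtain n c where "x \<in> Zalpha \<alpha>" "x = (\<Sum>k=1..n. of_int (c k) * inverse \<alpha> ^ k)"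
    by (auto simp: Lambda_def invZalpha_def)
  then show "x \<in> range \<iota>"
  proof (induction n arbitrary: x c)
    case 0
    then have "x = \<iota> 0"
      by (simp add: iota_eq)
    then show ?case by blast
  next
    case (Suc n)
    define y where "y = (\<Sum>k=1..n. of_int (c (Suc k)) * inverse \<alpha> ^ k)"
    have alpha_x: "\<alpha> * x = of_int (c 1) + y"
      using mult_sum_inverse_powers[OF alpha_nonzero] Suc.prems(2) by (simp add: y_def)
    then have "y \<in> Zalpha \<alpha>"
      using Suc.prems(1) alpha_mult_in_Zalpha of_int_in_Zalpha Zalpha_diff
      by (metis add_diff_cancel_left')
    then obtain w where "y = \<iota> w"
      using Suc.IH[of y "\<lambda>k. c (Suc k)"] y_def by blast
    then show ?case
      using in_iota_range_if_alpha_mult Suc.prems(1) alpha_x by blast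
  qed
qed (auto intro: iota_in_Lambda)

lemma digit_unique:
  assumes "d \<in> digits a0" and "e \<in> digits a0"
    and "(x - d) / \<alpha> \<in> Zalpha \<alpha>" and "(x - e) / \<alpha> \<in> Zalpha \<alpha>"
  shows "d = e"
proof -
  obtain i j where d: "d = of_int i" and e: "e = of_int j" and "0 \<le> i" "i < a0" "0 \<le> j" "j < a0"
    using assms(1,2) a0_pos by (auto simp: digits_def)
  have "of_int (j - i) = \<alpha> * ((x - d) / \<alpha> - (x - e) / \<alpha>)"
    using alpha_nonzero by (simp add: d e field_simps)
  then have "a0 dvd (j - i)"
    using a0_dvd_if_alpha_mult Zalpha_diff assms(3,4) by blast
  have "j - i = 0"
  proof (rule ccontr)
    assume "j - i \<noteq> 0"
    then have "\<bar>a0\<bar> \<le> \<bar>j - i\<bar>"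
      using dvd_imp_le_int \<open>a0 dvd (j - i)\<close> by blast
    then show False
      using \<open>0 \<le> i\<close> \<open>i < a0\<close> \<open>0 \<le> j\<close> \<open>j < a0\<close> by linarith
  qed
  then show ?thesis by (simp add: d e)
qed

lemma T_alpha_iota: "T_alpha \<alpha> a0 (\<iota> z) = \<iota> (tau_r a0 a1 a2 z)"
proof -
  define s where "s = a2 * fst z + a1 * snd z"
  define d where "d = (of_int (s mod a0) :: complex)"
  have "\<iota> z - d = of_int s - d + of_int (snd z * a2) * \<alpha>"
    by (simp add: iota_eq s_def algebra_simps)
  also have "of_int s - d = of_int (a0 * (s div a0))"
    by (simp add: d_def minus_mod_eq_mult_div flip: of_int_diff)
  also have "of_int (a0 * (s div a0)) + of_int (snd z * a2) * \<alpha> = \<alpha> * \<iota> (tau_r a0 a1 a2 z)"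
    by (simp add: alpha_mult_iota tau_r_eq_div s_def)
  finally have next_eq: "(\<iota> z - d) / \<alpha> = \<iota> (tau_r a0 a1 a2 z)"
    using alpha_nonzero by simp
  have "d \<in> digits a0"
    using a0_pos by (auto simp: digits_def d_def)
  have "(THE d'. d' \<in> digits a0 \<and> (\<iota> z - d') / \<alpha> \<in> Lambda \<alpha>) = d"
  proof (rule the_equality)
    show "d \<in> digits a0 \<and> (\<iota> z - d) / \<alpha> \<in> Lambda \<alpha>"
      using \<open>d \<in> digits a0\<close> next_eq iota_in_Lambda by simp
  next
    fix d' assume "d' \<in> digits a0 \<and> (\<iota> z - d') / \<alpha> \<in> Lambda \<alpha>"
    then show "d' = d"
      using digit_unique[of d' d "\<iota> z"] \<open>d \<in> digits a0\<close> next_eq iota_in_Lambda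
      by (auto simp: Lambda_def)
  qed
  then show ?thesis
    by (simp add: T_alpha_def next_eq)
qed

lemma has_int_expansion_iota_iff:
  "has_int_expansion \<alpha> a0 (\<iota> z) \<longleftrightarrow> tau_r_terminates a0 a1 a2 z"
proof -
  have "(T_alpha \<alpha> a0 ^^ n) (\<iota> z) = \<iota> ((tau_r a0 a1 a2 ^^ n) z)" for n
    by (induction n) (simp_all add: T_alpha_iota)
  then show ?thesis
    by (simp add: has_int_expansion_def tau_r_terminates_def iota_eq_0_iff)
qed

lemma finiteness_property_iff_tau_r:
  "finiteness_property \<alpha> a0 \<longleftrightarrow> (\<forall>z. tau_r_terminates a0 a1 a2 z)"
  by (simp add: finiteness_property_def Lambda_eq_iota_range has_int_expansion_iota_iff)

lemma V_alpha_expansions_iff_tau_r: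
  "(\<forall>N \<in> V_alpha \<alpha> a0 a1 a2. has_int_expansion \<alpha> a0 N) \<longleftrightarrow>
   (\<forall>v \<in> V_r a0 a1 a2. tau_r_terminates a0 a1 a2 v)"
  by (simp add: V_alpha_def has_int_expansion_iota_iff)

end

theorem mainTheorem5:
  fixes \<alpha> :: complex and a0 a1 a2 :: int
  assumes "Re \<alpha> \<in> \<rat>" and "Im \<alpha> \<in> \<rat>" and "Im \<alpha> \<noteq> 0"
    and "cmod \<alpha> > 1"
    and "a2 > 0" and "gcd a0 (gcd a1 a2) = 1"
    and "of_int a2 * \<alpha>\<^sup>2 + of_int a1 * \<alpha> + of_int a0 = 0"
  shows "finiteness_property \<alpha> a0 \<longleftrightarrow>
         (\<forall>N \<in> V_alpha \<alpha> a0 a1 a2. has_int_expansion \<alpha> a0 N)"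
proof -
  interpret nonreal_quadratic_root \<alpha> a0 a1 a2
    using assms by unfold_locales
  show ?thesis
    unfolding finiteness_property_iff_tau_r V_alpha_expansions_iff_tau_r
    by (rule tau_r_terminates_all_iff_V_r)
qed

end
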